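(* Let $U\subseteq\mathbb C^p$ be a connected open subset and $f:U\to Z$ a holomorphic map. If $F_1,F_2:U\to V$ are holomorphic lifts of $f$ (i.e. holomorphic maps with $\pi\circ F_1=\pi\circ F_2=f$), then there exists $g\in G$ with $F_2=g\circ F_1$ on $U$. The same holds for local lifts of holomorphic germs: if $F_1,F_2:(\mathbb C^p,x)\to V$ are holomorphic germs with $\pi\circ F_1=\pi\circ F_2=f$ as germs at $x$, then $F_2=g\circ F_1$ as germs for some $g\in G$.
   Context: $V$ is a finite-dimensional complex vector space, $G\subset GL(V)$ a finite group, $Z=V/G$ the orbit space realized as $\sigma(V)\subseteq\mathbb C^m$ via a minimal system of homogeneous generators $\sigma=(\sigma_1,\dots,\sigma_m)$ of $\mathbb C[V]^G$, with quotient map $\pi=\sigma:V\to Z$. A holomorphic map into $Z$ means a holomorphic map into $\mathbb C^m$ with values in $Z$. *)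

theory Defs
  imports "HOL-Analysis.Analysis"
begin

text \<open>V is modelled as complex^'n; GL(V) as invertible n x n complex matrices.\<close>

definition finite_linear_group :: "(complex^'n^'n) set \<Rightarrow> bool" where
  "finite_linear_group G \<longleftrightarrow> finite G \<and> mat 1 \<in> G \<and>
     (\<forall>g\<in>G. invertible g \<and> matrix_inv g \<in> G) \<and>
     (\<forall>g\<in>G. \<forall>h\<in>G. g ** h \<in> G)"

inductive alg_gen :: "('x \<Rightarrow> complex) set \<Rightarrow> ('x \<Rightarrow> complex) \<Rightarrow> bool"
  for S where
  const: "alg_gen S (\<lambda>_. c)"
| gen: "s \<in> S \<Longrightarrow> alg_gen S s"
| add: "alg_gen S p \<Longrightarrow> alg_gen S q \<Longrightarrow> alg_gen S (\<lambda>x. p x + q x)"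
| mult: "alg_gen S p \<Longrightarrow> alg_gen S q \<Longrightarrow> alg_gen S (\<lambda>x. p x * q x)"

definition polyfun :: "(complex^'n \<Rightarrow> complex) \<Rightarrow> bool" where
  "polyfun p \<longleftrightarrow> alg_gen (range (\<lambda>i x. x $ i)) p"

definition invariant_poly :: "(complex^'n^'n) set \<Rightarrow> (complex^'n \<Rightarrow> complex) \<Rightarrow> bool" where
  "invariant_poly G p \<longleftrightarrow> polyfun p \<and> (\<forall>g\<in>G. \<forall>x. p (g *v x) = p x)"

definition homogeneous_fun :: "(complex^'n \<Rightarrow> complex) \<Rightarrow> bool" where
  "homogeneous_fun p \<longleftrightarrow> (\<exists>d::nat. \<forall>t x. p (t *s x) = t ^ d * p x)"

definition minimal_homog_generators ::
    "(complex^'n^'n) set \<Rightarrow> (complex^'n \<Rightarrow> complex^'m) \<Rightarrow> bool" where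
  "minimal_homog_generators G \<sigma> \<longleftrightarrow>
     (\<forall>j. invariant_poly G (\<lambda>x. \<sigma> x $ j) \<and> homogeneous_fun (\<lambda>x. \<sigma> x $ j)) \<and>
     (\<forall>p. invariant_poly G p \<longrightarrow> alg_gen (range (\<lambda>j x. \<sigma> x $ j)) p) \<and>
     (\<forall>j. \<not> (\<forall>p. invariant_poly G p \<longrightarrow>
                   alg_gen ((\<lambda>k x. \<sigma> x $ k) ` (UNIV - {j})) p))"

text \<open>Holomorphic maps between complex coordinate spaces: complex-differentiable
  at every point (real Frechet derivative that is complex linear).\<close>
definition holo_on :: "(complex^'p) set \<Rightarrow> (complex^'p \<Rightarrow> complex^'k) \<Rightarrow> bool" where
  "holo_on U F \<longleftrightarrow> (\<forall>x\<in>U. \<exists>L. (F has_derivative L) (at x) \<and>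
       (\<forall>(c::complex) v. L (c *s v) = c *s L v))"

end

theory Submission
  imports Defs "HOL-Complex_Analysis.Conformal_Mappings"
begin

(*
  Averaging over G a polynomial that vanishes on the orbit of a and equals 1 on the
  orbit of b gives an invariant taking different values at a and b; hence invariants,
  and so the generators sigma, separate G-orbits. For two lifts F1, F2 of f this means
  that U is covered by the finitely many closed sets {y. F2 y = g F1 y}, g in G, one of
  which therefore has interior. Restricted to complex lines F2 - g F1 is holomorphic in
  one variable, so the one-variable identity theorem, propagated along convex balls and
  then through the connected set U, gives F2 = g F1 on all of U. Germs reduce to a ball.
*)

lemma invertible_matrix_inv:
  fixes A :: "'a::semiring_1^'n^'m"
  assumes "invertible A"
  shows "A ** matrix_inv A = mat 1" "matrix_inv A ** A = mat 1"
  using someI_ex[OF assms[unfolded invertible_def]] by (simp_all add: matrix_inv_def)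

lemma alg_gen_eq_if_generators_eq:
  "alg_gen S p \<Longrightarrow> (\<forall>s\<in>S. s a = s b) \<Longrightarrow> p a = p b"
  by (induction rule: alg_gen.induct) auto

lemma polyfun_const: "polyfun (\<lambda>_. c)"
  unfolding polyfun_def by (rule alg_gen.const)

lemma polyfun_coord: "polyfun (\<lambda>x. x $ i)"
  unfolding polyfun_def by (rule alg_gen.gen) simp

lemma polyfun_add: "polyfun p \<Longrightarrow> polyfun q \<Longrightarrow> polyfun (\<lambda>x. p x + q x)"
  unfolding polyfun_def by (rule alg_gen.add)

lemma polyfun_mult: "polyfun p \<Longrightarrow> polyfun q \<Longrightarrow> polyfun (\<lambda>x. p x * q x)"
  unfolding polyfun_def by (rule alg_gen.mult)

lemma polyfun_diff: "polyfun p \<Longrightarrow> polyfun q \<Longrightarrow> polyfun (\<lambda>x. p x - q x)"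
  using polyfun_add[OF _ polyfun_mult[OF polyfun_const[of "-1"]], of p q] by simp

lemma polyfun_sum: "finite A \<Longrightarrow> (\<And>a. a \<in> A \<Longrightarrow> polyfun (f a)) \<Longrightarrow> polyfun (\<lambda>x. \<Sum>a\<in>A. f a x)"
  by (induction A rule: finite_induct) (auto intro: polyfun_add polyfun_const)

lemma polyfun_prod: "finite A \<Longrightarrow> (\<And>a. a \<in> A \<Longrightarrow> polyfun (f a)) \<Longrightarrow> polyfun (\<lambda>x. \<Prod>a\<in>A. f a x)"
  by (induction A rule: finite_induct) (auto intro: polyfun_mult polyfun_const)

lemma polyfun_compose_matrix:
  fixes A :: "complex^'m^'n"
  assumes "polyfun p"
  shows "polyfun (\<lambda>x. p (A *v x))"
  using assms unfolding polyfun_def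
proof (induction rule: alg_gen.induct)
  case (gen s)
  then obtain i where "s = (\<lambda>x. x $ i)" by blast
  moreover have "polyfun (\<lambda>x. \<Sum>j\<in>UNIV. A $ i $ j * x $ j)"
    by (intro polyfun_sum polyfun_mult polyfun_const polyfun_coord) simp
  ultimately show ?case by (simp add: polyfun_def matrix_vector_mult_def)
qed (simp_all add: alg_gen.const alg_gen.add alg_gen.mult)

lemma polyfun_separates_point_from_finite:
  fixes A :: "(complex^'n) set"
  assumes "finite A" "b \<notin> A"
  obtains p where "polyfun p" "\<And>a. a \<in> A \<Longrightarrow> p a = 0" "p b = 1"
proof -
  have "\<forall>a\<in>A. \<exists>i. a $ i \<noteq> b $ i"
    using assms(2) by (metis vec_eq_iff)
  then obtain i where i: "\<And>a. a \<in> A \<Longrightarrow> a $ i a \<noteq> b $ i a"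
    by metis
  define p where "p x = (\<Prod>a\<in>A. (x $ i a - a $ i a) / (b $ i a - a $ i a))" for x
  have "polyfun p"
    unfolding p_def divide_inverse
    by (intro polyfun_prod polyfun_mult polyfun_diff polyfun_const polyfun_coord assms)
  moreover have "p a = 0" if "a \<in> A" for a
    unfolding p_def using assms(1) that by (auto intro: prod_zero)
  moreover have "p b = 1"
  proof -
    have "b $ i a - a $ i a \<noteq> 0" if "a \<in> A" for a
      using i[OF that] by auto
    then show ?thesis
      unfolding p_def by (intro prod.neutral) simp
  qed
  ultimately show thesis using that by blast
qed

lemma polyfun_separates_finite_sets:
  fixes A B :: "(complex^'n) set"
  assumes "finite A" "finite B" "A \<inter> B = {}"
  obtains p where "polyfun p" "\<And>a. a \<in> A \<Longrightarrow> p a = 0" "\<And>b. b \<in> B \<Longrightarrow> p b = 1"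
proof -
  have "\<forall>b\<in>B. \<exists>q. polyfun q \<and> (\<forall>a\<in>A. q a = 0) \<and> q b = 1"
  proof
    fix b assume "b \<in> B"
    then have "b \<notin> A"
      using assms(3) by blast
    then show "\<exists>q. polyfun q \<and> (\<forall>a\<in>A. q a = 0) \<and> q b = 1"
      by (metis polyfun_separates_point_from_finite[OF assms(1)])
  qed
  then obtain e where e: "\<forall>b\<in>B. polyfun (e b) \<and> (\<forall>a\<in>A. e b a = 0) \<and> e b b = 1"
    by (rule bchoice[THEN exE])
  \<comment> \<open>\<open>1 - p\<close> is a product over \<open>B\<close> of factors that are \<open>1\<close> on \<open>A\<close>, and each point of \<open>B\<close> kills one factor\<close>
  define p where "p x = 1 - (\<Prod>b\<in>B. 1 - e b x)" for x
  have "polyfun p"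
    unfolding p_def using e by (intro polyfun_prod polyfun_diff polyfun_const assms(2)) auto
  moreover have "p a = 0" if "a \<in> A" for a
    unfolding p_def using e that by simp
  moreover have "p b = 1" if "b \<in> B" for b
    unfolding p_def using e that assms(2) by (auto intro: prod_zero)
  ultimately show thesis using that by blast
qed

lemma finite_linear_groupD:
  assumes "finite_linear_group G"
  shows "finite G" "mat 1 \<in> G" "g \<in> G \<Longrightarrow> matrix_inv g \<in> G"
    "g \<in> G \<Longrightarrow> h \<in> G \<Longrightarrow> g ** h \<in> G"
    "g \<in> G \<Longrightarrow> g ** matrix_inv g = mat 1" "g \<in> G \<Longrightarrow> matrix_inv g ** g = mat 1"
  using assms invertible_matrix_inv unfolding finite_linear_group_def by auto

lemma same_orbit_if_orbits_meet:
  assumes "finite_linear_group G" "g \<in> G" "h \<in> G" "g *v a = h *v b"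
  shows "\<exists>k\<in>G. b = k *v a"
proof
  show "matrix_inv h ** g \<in> G"
    using assms finite_linear_groupD by blast
  have "b = (matrix_inv h ** h) *v b"
    by (simp add: finite_linear_groupD(6)[OF assms(1,3)])
  then show "b = (matrix_inv h ** g) *v a"
    using assms(4) by (simp add: matrix_vector_mul_assoc[symmetric])
qed

lemma invariant_poly_average:
  assumes G: "finite_linear_group G" and "polyfun p"
  shows "invariant_poly G (\<lambda>x. \<Sum>g\<in>G. p (g *v x))"
  unfolding invariant_poly_def
proof (intro conjI ballI allI)
  show "polyfun (\<lambda>x. \<Sum>g\<in>G. p (g *v x))"
    using assms finite_linear_groupD(1) by (intro polyfun_sum polyfun_compose_matrix)
  fix h x assume h: "h \<in> G"
  have "(\<Sum>g\<in>G. p ((g ** h) *v x)) = (\<Sum>g\<in>G. p (g *v x))"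
    by (rule sum.reindex_bij_witness[where j = "\<lambda>g. g ** h" and i = "\<lambda>g. g ** matrix_inv h"])
      (use h finite_linear_groupD[OF G] in \<open>auto simp: matrix_mul_assoc[symmetric]\<close>)
  then show "(\<Sum>g\<in>G. p (g *v (h *v x))) = (\<Sum>g\<in>G. p (g *v x))"
    by (simp add: matrix_vector_mul_assoc)
qed

lemma invariant_polys_separate_orbits:
  assumes G: "finite_linear_group G" and b: "\<forall>g\<in>G. b \<noteq> g *v a"
  obtains q where "invariant_poly G q" "q a \<noteq> q b"
proof -
  have fin: "finite G"
    using G by (rule finite_linear_groupD)
  have disj: "(\<lambda>g. g *v a) ` G \<inter> (\<lambda>g. g *v b) ` G = {}"
    using same_orbit_if_orbits_meet[OF G] b by blast
  obtain p where p: "polyfun p" "\<And>x. x \<in> (\<lambda>g. g *v a) ` G \<Longrightarrow> p x = 0"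
    "\<And>x. x \<in> (\<lambda>g. g *v b) ` G \<Longrightarrow> p x = 1"
    using polyfun_separates_finite_sets[OF finite_imageI[OF fin] finite_imageI[OF fin] disj] by blast
  define q where "q x = (\<Sum>g\<in>G. p (g *v x))" for x
  have "invariant_poly G q"
    unfolding q_def by (rule invariant_poly_average[OF G p(1)])
  moreover have "q a \<noteq> q b"
  proof -
    have "q a = 0" "q b = of_nat (card G)"
      unfolding q_def using p(2,3) by simp_all
    moreover have "card G \<noteq> 0"
      using fin finite_linear_groupD(2)[OF G] by auto
    ultimately show ?thesis
      by simp
  qed
  ultimately show thesis
    by (rule that)
qed

lemma same_orbit_if_generators_eq:
  fixes \<sigma> :: "complex^'n \<Rightarrow> complex^'m"
  assumes G: "finite_linear_group G"
    and gen: "\<And>p. invariant_poly G p \<Longrightarrow> alg_gen (range (\<lambda>j x. \<sigma> x $ j)) p"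
    and "\<sigma> a = \<sigma> b"
  shows "\<exists>g\<in>G. b = g *v a"
proof (rule ccontr)
  assume "\<not> (\<exists>g\<in>G. b = g *v a)"
  then obtain q where "invariant_poly G q" "q a \<noteq> q b"
    using invariant_polys_separate_orbits[OF G] by blast
  moreover have "q a = q b" if "invariant_poly G q" for q
    using alg_gen_eq_if_generators_eq[OF gen[OF that]] \<open>\<sigma> a = \<sigma> b\<close> by auto
  ultimately show False by blast
qed

lemma holo_on_subset: "holo_on W F \<Longrightarrow> U \<subseteq> W \<Longrightarrow> holo_on U F"
  unfolding holo_on_def by blast

lemma holo_on_imp_continuous_on: "holo_on U F \<Longrightarrow> continuous_on U F"
  unfolding holo_on_def by (meson continuous_at_imp_continuous_on has_derivative_continuous)

lemma holo_on_diff_matrix_vector_mult: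
  fixes A :: "complex^'j^'k"
  assumes "holo_on U F1" "holo_on U F2"
  shows "holo_on U (\<lambda>y. F2 y - A *v F1 y)"
  unfolding holo_on_def
proof
  fix x assume "x \<in> U"
  then obtain L1 L2 where L1: "(F1 has_derivative L1) (at x)" "\<And>c v. L1 (c *s v) = c *s L1 v"
    and L2: "(F2 has_derivative L2) (at x)" "\<And>c v. L2 (c *s v) = c *s L2 v"
    using assms unfolding holo_on_def by metis
  have "((\<lambda>y. F2 y - A *v F1 y) has_derivative (\<lambda>v. L2 v - A *v L1 v)) (at x)"
    using L1(1) L2(1) by (intro has_derivative_diff bounded_linear.has_derivative[OF matrix_vector_mul_bounded_linear])
  moreover have "L2 (c *s v) - A *v L1 (c *s v) = c *s (L2 v - A *v L1 v)" for c v
    by (simp add: L1(2) L2(2) vector_scalar_commute vector_ssub_ldistrib)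
  ultimately show "\<exists>L. ((\<lambda>y. F2 y - A *v F1 y) has_derivative L) (at x) \<and> (\<forall>c v. L (c *s v) = c *s L v)"
    by blast
qed

lemma linear_scale_vector: "linear (\<lambda>t::complex. t *s (v::complex^'p))"
  by (rule linearI) (simp_all add: vec_eq_iff distrib_right)

lemma has_derivative_complex_line:
  "((\<lambda>t::complex. s + t *s (v::complex^'p)) has_derivative (\<lambda>u. u *s v)) (at t)"
  using linear_scale_vector[of v]
  by (auto intro!: derivative_eq_intros bounded_linear_imp_has_derivative simp: linear_conv_bounded_linear)

lemma holo_on_restrict_complex_line:
  assumes "holo_on U F"
  shows "(\<lambda>t. F (s + t *s v) $ i) holomorphic_on {t. s + t *s v \<in> U}"
  unfolding holomorphic_on_def
proof
  fix t assume "t \<in> {t. s + t *s v \<in> U}"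
  then obtain L where L: "(F has_derivative L) (at (s + t *s v))" "\<And>c w. L (c *s w) = c *s L w"
    using assms unfolding holo_on_def by auto
  have "((\<lambda>t. F (s + t *s v) $ i) has_derivative (\<lambda>u. L (u *s v) $ i)) (at t)"
    using has_derivative_compose[OF has_derivative_complex_line L(1)]
    by (auto intro: bounded_linear.has_derivative[OF bounded_linear_vec_nth] simp: o_def)
  then have "((\<lambda>t. F (s + t *s v) $ i) has_field_derivative L v $ i) (at t)"
    by (simp add: has_field_derivative_def L(2) mult.commute[of _ "L v $ i"])
  then show "(\<lambda>t. F (s + t *s v) $ i) field_differentiable at t within {t. s + t *s v \<in> U}"
    using field_differentiable_at_within field_differentiable_def by blast
qed

lemma holo_on_convex_identity_theorem:
  fixes F :: "complex^'p \<Rightarrow> complex^'k"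
  assumes F: "holo_on C F" and C: "open C" "convex C"
    and s: "s \<in> C" "\<forall>\<^sub>F y in nhds s. F y = 0" and w: "w \<in> C"
  shows "F w = 0"
proof -
  define l where "l t = s + t *s (w - s)" for t :: complex
  define D where "D = l -` C"
  have cont_l: "isCont l t" for t
    unfolding l_def by (rule has_derivative_continuous[OF has_derivative_complex_line])
  have "open D"
    unfolding D_def by (rule continuous_open_vimage[OF C(1) cont_l])
  have "D = (\<lambda>t. t *s (w - s)) -` ((+) (- s) ` C)"
    unfolding D_def l_def by (force simp: algebra_simps)
  moreover have "convex ((\<lambda>t. t *s (w - s)) -` ((+) (- s) ` C))"
    by (intro convex_linear_vimage linear_scale_vector convex_translation C(2))
  ultimately have "connected D"
    by (simp only: convex_connected)
  obtain e where e: "e > 0" "\<And>y. y \<in> ball s e \<Longrightarrow> F y = 0"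
    using s(2) unfolding eventually_nhds_metric by (metis dist_commute mem_ball)
  define D0 where "D0 = D \<inter> l -` ball s e"
  have "open D0"
    unfolding D0_def using \<open>open D\<close> cont_l by (intro open_Int continuous_open_vimage open_ball) auto
  have "0 \<in> D0" "1 \<in> D"
    unfolding D0_def D_def l_def using s(1) w e(1) by auto
  have "F (l 1) $ i = 0" for i
  proof (rule analytic_continuation_open[of D0 D "\<lambda>t. F (l t) $ i" "\<lambda>_. 0"])
    show "(\<lambda>t. F (l t) $ i) holomorphic_on D"
      using holo_on_restrict_complex_line[OF F, of s "w - s" i]
      unfolding D_def l_def vimage_def .
  qed (use \<open>open D0\<close> \<open>open D\<close> \<open>connected D\<close> \<open>0 \<in> D0\<close> \<open>1 \<in> D\<close> e(2) in \<open>auto simp: D0_def\<close>)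
  then show ?thesis
    by (simp add: l_def vec_eq_iff)
qed

lemma holo_on_identity_theorem:
  fixes F :: "complex^'p \<Rightarrow> complex^'k"
  assumes F: "holo_on U F" and U: "open U" "connected U"
    and a: "a \<in> U" "\<forall>\<^sub>F y in nhds a. F y = 0" and b: "b \<in> U"
  shows "F b = 0"
proof -
  have "\<forall>\<^sub>F y in nhds b. F y = 0"
  proof (rule connected_induction_simple[OF U(2) a(1) b, where P = "\<lambda>z. \<forall>\<^sub>F y in nhds z. F y = 0"])
    fix z assume "z \<in> U"
    then obtain r where r: "r > 0" "ball z r \<subseteq> U"
      using U(1) openE by blast
    have "\<forall>\<^sub>F y in nhds x'. F y = 0"
      if "x \<in> ball z r" "\<forall>\<^sub>F y in nhds x. F y = 0" "x' \<in> ball z r" for x x'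
      using eventually_nhds_in_open[OF open_ball that(3)]
      by (rule eventually_mono)
        (use holo_on_convex_identity_theorem[OF holo_on_subset[OF F r(2)] open_ball convex_ball that(1,2)] in blast)
    moreover have "openin (top_of_set U) (ball z r)"
      using r(2) by (simp add: open_subset)
    ultimately show "\<exists>T. openin (top_of_set U) T \<and> z \<in> T \<and>
        (\<forall>x\<in>T. \<forall>x'\<in>T. (\<forall>\<^sub>F y in nhds x. F y = 0) \<longrightarrow> (\<forall>\<^sub>F y in nhds x'. F y = 0))"
      using r(1) by (metis centre_in_ball)
  qed (rule a(2))
  then show ?thesis
    by (rule eventually_nhds_x_imp_x)
qed

lemma finite_zero_set_cover_has_interior:
  fixes \<phi> :: "'i \<Rightarrow> 'a::topological_space \<Rightarrow> 'b::{t1_space, zero}"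
  assumes "finite I" "open W" "W \<noteq> {}" "\<And>i. i \<in> I \<Longrightarrow> continuous_on W (\<phi> i)"
    and "\<And>y. y \<in> W \<Longrightarrow> \<exists>i\<in>I. \<phi> i y = 0"
  shows "\<exists>i\<in>I. \<exists>a\<in>W. \<forall>\<^sub>F y in nhds a. \<phi> i y = 0"
  using assms
proof (induction I arbitrary: W rule: finite_induct)
  case (insert i I)
  show ?case
  proof (cases "\<forall>y\<in>W. \<phi> i y = 0")
    case True
    then show ?thesis
      using insert.prems(1,2) eventually_nhds_in_open by (blast intro: eventually_mono)
  next
    case False
    define W' where "W' = W \<inter> \<phi> i -` (- {0})"
    have "open W'"
      unfolding W'_def using insert.prems(1,3) by (auto intro: continuous_open_preimage)
    moreover have "W' \<noteq> {}" "W' \<subseteq> W"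
      using False unfolding W'_def by auto
    ultimately have "\<exists>j\<in>I. \<exists>a\<in>W'. \<forall>\<^sub>F y in nhds a. \<phi> j y = 0"
      using insert.prems(3,4) by (intro insert.IH) (auto simp: W'_def intro: continuous_on_subset)
    then show ?thesis
      using \<open>W' \<subseteq> W\<close> by blast
  qed
qed blast

lemma holomorphic_lifts_differ_by_group_element:
  fixes G :: "(complex^'n^'n) set" and \<sigma> :: "complex^'n \<Rightarrow> complex^'m"
    and U :: "(complex^'p) set"
  assumes G: "finite_linear_group G"
    and gen: "\<And>p. invariant_poly G p \<Longrightarrow> alg_gen (range (\<lambda>j x. \<sigma> x $ j)) p"
    and U: "open U" "connected U" and F: "holo_on U F1" "holo_on U F2"
    and lift: "\<And>y. y \<in> U \<Longrightarrow> \<sigma> (F1 y) = \<sigma> (F2 y)"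
  shows "\<exists>g\<in>G. \<forall>y\<in>U. F2 y = g *v F1 y"
proof (cases "U = {}")
  case True
  then show ?thesis
    using finite_linear_groupD(2)[OF G] by blast
next
  case False
  have "\<exists>g\<in>G. F2 y - g *v F1 y = 0" if "y \<in> U" for y
    using same_orbit_if_generators_eq[OF G gen lift[OF that]] by simp
  moreover have "continuous_on U (\<lambda>y. F2 y - g *v F1 y)" for g
    by (intro holo_on_imp_continuous_on holo_on_diff_matrix_vector_mult F)
  ultimately obtain g a where g: "g \<in> G" "a \<in> U" "\<forall>\<^sub>F y in nhds a. F2 y - g *v F1 y = 0"
    using finite_zero_set_cover_has_interior[OF finite_linear_groupD(1)[OF G] U(1) False,
        of "\<lambda>g y. F2 y - g *v F1 y"] by blast
  have "F2 y - g *v F1 y = 0" if "y \<in> U" for y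
    using holo_on_identity_theorem[OF holo_on_diff_matrix_vector_mult[OF F] U g(2,3) that] .
  then show ?thesis
    using g(1) by auto
qed

lemma holomorphic_germ_lifts_differ_by_group_element:
  fixes G :: "(complex^'n^'n) set" and \<sigma> :: "complex^'n \<Rightarrow> complex^'m"
    and W :: "(complex^'p) set"
  assumes G: "finite_linear_group G"
    and gen: "\<And>p. invariant_poly G p \<Longrightarrow> alg_gen (range (\<lambda>j x. \<sigma> x $ j)) p"
    and W: "open W" "x \<in> W" and F: "holo_on W F1" "holo_on W F2"
    and lift: "\<forall>\<^sub>F y in nhds x. \<sigma> (F1 y) = \<sigma> (F2 y)"
  shows "\<exists>g\<in>G. \<forall>\<^sub>F y in nhds x. F2 y = g *v F1 y"
proof -
  obtain r where r: "r > 0" "ball x r \<subseteq> W" "\<And>y. y \<in> ball x r \<Longrightarrow> \<sigma> (F1 y) = \<sigma> (F2 y)"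
    using eventually_conj[OF lift eventually_nhds_in_open[OF W]]
    unfolding eventually_nhds_metric by (metis dist_commute mem_ball subsetI)
  then obtain g where "g \<in> G" "\<forall>y\<in>ball x r. F2 y = g *v F1 y"
    using holomorphic_lifts_differ_by_group_element[OF G gen open_ball connected_ball
        holo_on_subset[OF F(1)] holo_on_subset[OF F(2)]] by blast
  moreover have "\<forall>\<^sub>F y in nhds x. y \<in> ball x r"
    using r(1) by (intro eventually_nhds_in_open) auto
  ultimately show ?thesis
    by (blast intro: eventually_mono)
qed

theorem theorem2p7:
  fixes G :: "(complex^'n^'n) set"
    and \<sigma> :: "complex^'n \<Rightarrow> complex^'m"
  assumes "finite_linear_group G"
    and "minimal_homog_generators G \<sigma>"
  shows "(\<forall>(U :: (complex^'p) set) (f :: complex^'p \<Rightarrow> complex^'m) F1 F2.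
            open U \<and> connected U \<and> holo_on U f \<and> (\<forall>y\<in>U. f y \<in> range \<sigma>) \<and>
            holo_on U F1 \<and> holo_on U F2 \<and>
            (\<forall>y\<in>U. \<sigma> (F1 y) = f y \<and> \<sigma> (F2 y) = f y)
            \<longrightarrow> (\<exists>g\<in>G. \<forall>y\<in>U. F2 y = g *v F1 y))
       \<and> (\<forall>(x :: complex^'p) (f :: complex^'p \<Rightarrow> complex^'m) F1 F2.
            (\<exists>W. open W \<and> x \<in> W \<and> holo_on W f) \<and>
            (\<exists>W. open W \<and> x \<in> W \<and> holo_on W F1) \<and>
            (\<exists>W. open W \<and> x \<in> W \<and> holo_on W F2) \<and>
            eventually (\<lambda>y. f y \<in> range \<sigma>) (nhds x) \<and>
            eventually (\<lambda>y. \<sigma> (F1 y) = f y \<and> \<sigma> (F2 y) = f y) (nhds x)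
            \<longrightarrow> (\<exists>g\<in>G. eventually (\<lambda>y. F2 y = g *v F1 y) (nhds x)))"
proof -
  have gen: "\<And>p. invariant_poly G p \<Longrightarrow> alg_gen (range (\<lambda>j x. \<sigma> x $ j)) p"
    using assms(2) unfolding minimal_homog_generators_def by blast
  show ?thesis
  proof (intro conjI allI impI, goal_cases)
    case (1 U f F1 F2)
    then show ?case
      using holomorphic_lifts_differ_by_group_element[OF assms(1) gen, of U F1 F2] by auto
  next
    case (2 x f F1 F2)
    then obtain W1 W2 where "open W1" "x \<in> W1" "holo_on W1 F1" "open W2" "x \<in> W2" "holo_on W2 F2"
      by blast
    moreover have "\<forall>\<^sub>F y in nhds x. \<sigma> (F1 y) = \<sigma> (F2 y)"
      using 2 by (auto elim: eventually_mono)
    ultimately show ?case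
      by (intro holomorphic_germ_lifts_differ_by_group_element[OF assms(1) gen, of "W1 \<inter> W2"])
        (auto intro: holo_on_subset)
  qed
qed

end
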